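(* Let $2<p<\frac{10}{3}$, $\lambda_3<0$, and let $(a_1,r_1)\in(0,\bar a)\times(0,+\infty)$ satisfy $g(a_1,r_1)\ge0$. Then for any $a_2\in(0,a_1]$ one has $g(a_2,r_2)\ge0$ for every $r_2\in\left[\frac{a_2}{a_1}r_1,\,r_1\right]$.
   Context: $\Lambda:=\max\{|\lambda_1-\frac{4\pi}{3}\lambda_2|,|\lambda_1+\frac{8\pi}{3}\lambda_2|\}>0$ for given real $\lambda_1,\lambda_2$. For $q\in(2,6)$, $\gamma_q:=\frac{3(q-2)}{2q}$ and $C_q>0$ is a Gagliardo–Nirenberg constant: $\|u\|_q\le C_q\|\nabla u\|_2^{\gamma_q}\|u\|_2^{1-\gamma_q}$ for $u\in H^1(\mathbb{R}^3)$. $g(a,r):=\frac12-\frac{\Lambda}{2}C_4^4ra-\frac{2|\lambda_3|}{p}C_p^pa^{p(1-\gamma_p)}r^{p\gamma_p-2}$ for $a,r>0$. $\bar a:=(1/(2\alpha))^{3/4}$ with $\alpha:=\frac12(\Lambda C_4^4)^{\frac{p\gamma_p-2}{p\gamma_p-3}}\left(\frac{4|\lambda_3|(2-p\gamma_p)C_p^p}{p}\right)^{\frac{1}{3-p\gamma_p}}+2\left(\frac{C_p^p|\lambda_3|}{p}\right)^{\frac{1}{3-p\gamma_p}}\left(\frac{4(2-p\gamma_p)}{\Lambda C_4^4}\right)^{\frac{p\gamma_p-2}{3-p\gamma_p}}$. *)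

theory Defs
  imports Complex_Main
begin

definition gammaq :: "real \<Rightarrow> real" where
  "gammaq q = 3 * (q - 2) / (2 * q)"

definition Lam :: "real \<Rightarrow> real \<Rightarrow> real" where
  "Lam l1 l2 = max \<bar>l1 - 4 * pi / 3 * l2\<bar> \<bar>l1 + 8 * pi / 3 * l2\<bar>"

definition gfun :: "real \<Rightarrow> real \<Rightarrow> real \<Rightarrow> real \<Rightarrow> real \<Rightarrow> real \<Rightarrow> real \<Rightarrow> real" where
  "gfun L C4 Cp l3 p a r =
     1/2 - L / 2 * C4 ^ 4 * r * a
     - 2 * \<bar>l3\<bar> / p * Cp powr p * a powr (p * (1 - gammaq p)) * r powr (p * gammaq p - 2)"

definition alpha :: "real \<Rightarrow> real \<Rightarrow> real \<Rightarrow> real \<Rightarrow> real \<Rightarrow> real" where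
  "alpha L C4 Cp l3 p =
     1/2 * (L * C4 ^ 4) powr ((p * gammaq p - 2) / (p * gammaq p - 3))
       * (4 * \<bar>l3\<bar> * (2 - p * gammaq p) * Cp powr p / p) powr (1 / (3 - p * gammaq p))
   + 2 * (Cp powr p * \<bar>l3\<bar> / p) powr (1 / (3 - p * gammaq p))
       * (4 * (2 - p * gammaq p) / (L * C4 ^ 4)) powr ((p * gammaq p - 2) / (3 - p * gammaq p))"

definition abar :: "real \<Rightarrow> real \<Rightarrow> real \<Rightarrow> real \<Rightarrow> real \<Rightarrow> real" where
  "abar L C4 Cp l3 p = (1 / (2 * alpha L C4 Cp l3 p)) powr (3/4)"

end

theory Submission
  imports Defs
begin

text \<open>The linear term of g only involves the product r a, which can only decrease.
  In the nonlinear term the exponent of r is p \<gamma>(p) - 2 = (3p - 10)/2 \<le> 0, while the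
  exponents of a and r add up to p - 2 \<ge> 0; so replacing a by q a and r by some
  r' \<ge> q r, with 0 < q \<le> 1, does not increase that term either.\<close>

lemma p_gammaq_eq:
  assumes "p \<noteq> 0"
  shows "p * gammaq p = 3 * (p - 2) / 2"
  using assms unfolding gammaq_def by (simp add: field_simps)

lemma scaled_powr_mult_powr_le:
  fixes q a r r' s t :: real
  assumes "0 < q" "q \<le> 1" "0 < a" "0 < r"
    and "t \<le> 0" "0 \<le> s + t"
    and "q * r \<le> r'"
  shows "(q * a) powr s * r' powr t \<le> a powr s * r powr t"
proof -
  have "r' powr t \<le> (q * r) powr t"
    using powr_mono2'[OF \<open>t \<le> 0\<close>] assms(1,4,7) by simp
  then have "(q * a) powr s * r' powr t \<le> (q * a) powr s * (q * r) powr t"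
    by (simp add: mult_left_mono)
  also have "\<dots> = q powr (s + t) * (a powr s * r powr t)"
    using assms(1,3,4) by (simp add: powr_mult powr_add)
  also have "\<dots> \<le> a powr s * r powr t"
    using assms(1,2,6) by (intro mult_left_le_one_le powr_le1) auto
  finally show ?thesis .
qed

lemma gfun_le_scaled:
  fixes L C4 Cp l3 p a1 r1 a2 r2 :: real
  assumes "0 \<le> L" "2 \<le> p" "p \<le> 10/3"
    and "0 < a1" "0 < r1" "0 < a2" "a2 \<le> a1"
    and "a2 / a1 * r1 \<le> r2" "r2 \<le> r1"
  shows "gfun L C4 Cp l3 p a1 r1 \<le> gfun L C4 Cp l3 p a2 r2"
proof -
  define q where "q = a2 / a1"
  have q: "0 < q" "q \<le> 1" "a2 = q * a1"
    using assms(4,6,7) by (auto simp: q_def)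
  have "p * gammaq p - 2 \<le> 0" "0 \<le> p * (1 - gammaq p) + (p * gammaq p - 2)"
    using assms(2,3) p_gammaq_eq[of p] by (auto simp: algebra_simps)
  then have nonlinear:
    "a2 powr (p * (1 - gammaq p)) * r2 powr (p * gammaq p - 2)
       \<le> a1 powr (p * (1 - gammaq p)) * r1 powr (p * gammaq p - 2)"
    using scaled_powr_mult_powr_le[OF q(1,2) assms(4,5), of "p * gammaq p - 2"] assms(8) q(3)
    unfolding q_def by simp
  have "r2 * a2 \<le> r1 * a1"
    using assms(5-9) q by (intro mult_mono) auto
  then have linear: "L / 2 * C4 ^ 4 * (r2 * a2) \<le> L / 2 * C4 ^ 4 * (r1 * a1)"
    using assms(1) by (intro mult_left_mono) auto
  have "2 * \<bar>l3\<bar> / p * Cp powr p * (a2 powr (p * (1 - gammaq p)) * r2 powr (p * gammaq p - 2))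
     \<le> 2 * \<bar>l3\<bar> / p * Cp powr p * (a1 powr (p * (1 - gammaq p)) * r1 powr (p * gammaq p - 2))"
    using nonlinear assms(2) by (intro mult_left_mono) auto
  with linear show ?thesis
    unfolding gfun_def by (simp add: mult.assoc)
qed

theorem lemma2p5:
  fixes l1 l2 l3 p C4 Cp a1 r1 a2 r2 :: real
  assumes "Lam l1 l2 > 0"
    and "C4 > 0" and "Cp > 0"
    and "2 < p" and "p < 10/3"
    and "l3 < 0"
    and "0 < a1" and "a1 < abar (Lam l1 l2) C4 Cp l3 p"
    and "0 < r1"
    and "gfun (Lam l1 l2) C4 Cp l3 p a1 r1 \<ge> 0"
    and "0 < a2" and "a2 \<le> a1"
    and "a2 / a1 * r1 \<le> r2" and "r2 \<le> r1"
  shows "gfun (Lam l1 l2) C4 Cp l3 p a2 r2 \<ge> 0"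
  using gfun_le_scaled[of "Lam l1 l2" p a1 r1 a2 r2 C4 Cp l3] assms by linarith

end
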